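(* (Preservation) If $\vdash\mathtt M:\mathsf{Idx}$ is derivable and $\mathtt M\Downarrow^1\mathtt N$, then $\vdash\mathtt N:\mathsf{Idx}$ is derivable. (Progress) If $\vdash\mathtt M:\mathsf{Idx}$ is derivable and $\mathtt M\Downarrow^1\mathtt N$, then $\mathtt N$ is a numeral $\underline n$.
   Context: qPCF. Gates: $\mathcal U=\bigcup_k\mathcal U(k)$, $\mathtt U\in\mathcal U(k)$ acts on $k+1$ qubits; $\ddagger$ is a fixed total arity-preserving map on gate names. Raw terms: $\mathtt{M},\mathtt{N},\mathtt{P},\mathtt{Q},\mathtt{E}::=\mathtt{x}\mid\lambda\mathtt{x}^\sigma.\mathtt{M}\mid\mathtt{M}\mathtt{N}\mid\underline{n}\mid\mathtt{pred}\mid\mathtt{succ}\mid\mathtt{if}\mid\mathtt{Y}_\sigma\mid\mathtt{set}\mid\mathtt{get}\mid\mathtt{U}\mid{::}\mid{\parallel}\mid\mathtt{iter}\mid\mathtt{reverse}\mid\odot\mathtt{E}\mathtt{E}'\ (\odot\in\{+,*\})\mid\mathtt{size}\mid\mathtt{dMeas}$, with infix $::$, $\parallel$, $+$. Types $\sigma::=\mathsf{Nat}\mid\mathsf{Idx}\mid\mathsf{Circ}(\mathtt E)\mid\Pi\mathtt x^\sigma.\tau$; $\sigma\to\tau$ is a non-dependent $\Pi$. Bases $B$: finite variable-to-type assignments with distinct variables. $\mathrm{sC}(B,\mathsf{Nat})=\mathrm{sC}(B,\mathsf{Idx})=\emptyset$, $\mathrm{sC}(B,\mathsf{Circ}(\mathtt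 E))=\{B\vdash\mathtt E:\mathsf{Idx}\}$, $\mathrm{sC}(B,\Pi\mathtt x^\sigma.\tau)=\mathrm{sC}(B,\sigma)\cup\mathrm{sC}(B\cup\{\mathtt x:\sigma\},\tau)$, extended to sets by union; $\mathrm{WF}(B,S)$ means all typings in $\mathrm{sC}(B,S)$ are derivable. Typing rules: (P0) $\mathrm{WF}(B,\mathrm{codom}(B)\cup\{\sigma\})\Rightarrow B\cup\{\mathtt x:\sigma\}\vdash\mathtt x:\sigma$; (P1) $B\cup\{\mathtt x:\sigma\}\vdash\mathtt N:\tau\Rightarrow B\vdash\lambda\mathtt x^\sigma.\mathtt N:\Pi\mathtt x^\sigma.\tau$; (P2) $B\vdash\mathtt P:\Pi\mathtt x^\sigma.\tau$, $B\vdash\mathtt Q:\sigma\Rightarrow B\vdash\mathtt{PQ}:\tau[\mathtt Q/\mathtt x]$; given $\mathrm{WF}(B,\mathrm{codom}(B))$: $\mathtt{succ},\mathtt{pred}:\mathsf{Nat}\to\mathsf{Nat}$, $\mathtt{if}:\mathsf{Nat}\to\mathsf{Nat}\to\mathsf{Nat}\to\mathsf{Nat}$, $\mathtt{get},\mathtt{set}:\mathsf{Nat}\to\mathsf{Nat}\to\mathsf{Nat}$, $\underline n:\mathsf{Idx}$, $\mathtt U:\mathsf{Circ}(\underline k)$ for $\mathtt U\in\mathcal U(k)$; (P5') $B\vdash\mathtt E:\mathsf{Idx}\Rightarrow B\vdash\mathtt{if}:\mathsf{Nat}\to\mathsf{Circ}(\mathtt E)\to\mathsf{Circ}(\mathtt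 E)\to\mathsf{Circ}(\mathtt E)$; (P6) $\sigma=\tau_1\to\cdots\to\tau_n\to\gamma$, $\gamma\in\{\mathsf{Nat},\mathsf{Circ}(\mathtt E)\}$, $\mathrm{WF}(B,\mathrm{codom}(B)\cup\{\sigma\})\Rightarrow B\vdash\mathtt Y_\sigma:(\sigma\to\sigma)\to\sigma$; (I0) $B\vdash\mathtt M:\mathsf{Idx}\Rightarrow B\vdash\mathtt M:\mathsf{Nat}$; (I2) $B\vdash\mathtt E_0,\mathtt E_1:\mathsf{Idx}\Rightarrow B\vdash\odot\mathtt E_0\mathtt E_1:\mathsf{Idx}$; (I3) $B\vdash\mathtt M:\mathsf{Circ}(\mathtt E)\Rightarrow B\vdash\mathtt{size}\,\mathtt M:\mathsf{Idx}$; given $B\vdash\mathtt E,\mathtt E_0,\mathtt E_1:\mathsf{Idx}$: ${::}:\mathsf{Circ}(\mathtt E)\to\mathsf{Circ}(\mathtt E)\to\mathsf{Circ}(\mathtt E)$, ${\parallel}:\mathsf{Circ}(\mathtt E_0)\to\mathsf{Circ}(\mathtt E_1)\to\mathsf{Circ}(\mathtt E_0+\mathtt E_1+\underline1)$, $\mathtt{reverse}:\mathsf{Circ}(\mathtt E)\to\mathsf{Circ}(\mathtt E)$, $\mathtt{iter}:\Pi\mathtt x^{\mathsf{Idx}}.\mathsf{Circ}(\mathtt E_0)\to\mathsf{Circ}(\mathtt E_1)\to\mathsf{Circ}(\mathtt E_0+((\underline1+\mathtt E_1)*\mathtt x))$, $\mathtt{dMeas}:\mathsf{Nat}\to\mathsf{Circ}(\mathtt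 E)\to\mathsf{Nat}$. Types are identified modulo $\alpha$, $\beta$-convertibility of terms in types, and ring laws of $+,*$ with $0,1$. Evaluation $\mathtt M\Downarrow^\alpha\mathtt V$ ($\mathtt M$ closed of ground type, $0<\alpha\le1$, $\mathtt V$ a numeral or a term built from gate names with $::,\parallel$) is the big-step call-by-name relation: $\underline n\Downarrow^1\underline n$; $\mathtt{succ}$/$\mathtt{pred}$ evaluate their argument and add/subtract one; $(\lambda\mathtt x.\mathtt M)\mathtt N\vec{\mathtt P}\Downarrow^\alpha\mathtt V$ if $\mathtt M[\mathtt N/\mathtt x]\vec{\mathtt P}\Downarrow^\alpha\mathtt V$; $\mathtt{if}\,\mathtt M\mathtt L\mathtt R\Downarrow^{\alpha\alpha'}\mathtt V$ if $\mathtt M\Downarrow^\alpha\underline0,\mathtt L\Downarrow^{\alpha'}\mathtt V$ or $\mathtt M\Downarrow^\alpha\underline{n+1},\mathtt R\Downarrow^{\alpha'}\mathtt V$; $\mathtt Y\mathtt M\vec{\mathtt P}\Downarrow^\alpha\mathtt V$ if $\mathtt M(\mathtt Y\mathtt M)\vec{\mathtt P}\Downarrow^\alpha\mathtt V$; $\mathtt{size}\,\mathtt M\Downarrow^\alpha\underline n$ if $\vdash\mathtt M:\mathsf{Circ}(\mathtt E)$ and $\mathtt E\Downarrow^\alpha\underline n$; $\odot\mathtt E_0\mathtt E_1\Downarrow^{\alpha\alpha'}\underline{m\odot n}$ if $\mathtt E_0\Downarrow^\alpha\underline m,\mathtt E_1\Downarrow^{\alpha'}\underline n$; $\mathtt{get}\,\mathtt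 M\mathtt N$ / $\mathtt{set}\,\mathtt M\mathtt N$ evaluate both arguments to $\underline m,\underline n$ (probabilities multiplied) and return the $n$-th binary digit of $m$ / $m$ with that digit set to $1$; $\mathtt U\Downarrow^\alpha\mathtt U$; $::$, $\parallel$ evaluate components; $\mathtt{reverse}$ replaces gates by their $\ddagger$-image and reverses sequential order; $\mathtt{iter}\,\mathtt E\mathtt M_0\mathtt M_1\Downarrow\mathtt C_1\parallel\cdots\parallel\mathtt C_1\parallel\mathtt C_0$ ($n$ copies, $\mathtt E\Downarrow\underline n$); $\mathtt{dMeas}\,\mathtt M\mathtt N\Downarrow^{\alpha\alpha'\alpha''}\underline n$ if $\mathtt M\Downarrow^\alpha\underline m$, $\mathtt N\Downarrow^{\alpha'}\mathtt C$, $\vdash\mathtt N:\mathsf{Circ}(\underline k)$ and $\underline n$ is a quantum measurement outcome of the circuit $\mathtt C$ on input $m$, obtained with probability $\alpha''$. *)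

theory Defs
  imports Complex_Main
begin

text \<open>Gate names are elements of a type 'g; a gate U belongs to U(k) iff ar U = k
  (ar is a parameter).
  The combinators :: and || are constants applied to two arguments;
  + and * (the operator written odot) take their two arguments directly.\<close>

datatype 'g trm =
    Var nat
  | Lam nat "'g ty" "'g trm"
  | App "'g trm" "'g trm"
  | Num nat
  | PredC
  | SuccC
  | IfC
  | YC "'g ty"
  | SetC
  | GetC
  | Gate 'g
  | SeqC
  | ParC
  | IterC
  | RevC
  | QPlus "'g trm" "'g trm"
  | QTimes "'g trm" "'g trm"
  | SizeC
  | DMeasC
and 'g ty =
    TNat
  | TIdx
  | Circ "'g trm"
  | Pi nat "'g ty" "'g ty"

primrec fvt :: "'g trm \<Rightarrow> nat set" and fvty :: "'g ty \<Rightarrow> nat set" where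
  "fvt (Var x) = {x}"
| "fvt (Lam x s M) = fvty s \<union> (fvt M - {x})"
| "fvt (App M N) = fvt M \<union> fvt N"
| "fvt (Num n) = {}"
| "fvt PredC = {}"
| "fvt SuccC = {}"
| "fvt IfC = {}"
| "fvt (YC s) = fvty s"
| "fvt SetC = {}"
| "fvt GetC = {}"
| "fvt (Gate U) = {}"
| "fvt SeqC = {}"
| "fvt ParC = {}"
| "fvt IterC = {}"
| "fvt RevC = {}"
| "fvt (QPlus E F) = fvt E \<union> fvt F"
| "fvt (QTimes E F) = fvt E \<union> fvt F"
| "fvt SizeC = {}"
| "fvt DMeasC = {}"
| "fvty TNat = {}"
| "fvty TIdx = {}"
| "fvty (Circ E) = fvt E"
| "fvty (Pi x s t) = fvty s \<union> (fvty t - {x})"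

definition fresh :: "nat set \<Rightarrow> nat" where
  "fresh S = (LEAST n. n \<notin> S)"

text \<open>Simultaneous capture-avoiding substitution; bound variables are renamed
  to a variable fresh for the substituted terms (terms in types are
  identified modulo alpha anyway).\<close>

primrec psubst :: "(nat \<Rightarrow> 'g trm) \<Rightarrow> 'g trm \<Rightarrow> 'g trm"
  and psubsty :: "(nat \<Rightarrow> 'g trm) \<Rightarrow> 'g ty \<Rightarrow> 'g ty" where
  "psubst \<rho> (Var x) = \<rho> x"
| "psubst \<rho> (Lam x s M) =
     (let z = fresh (\<Union>v\<in>fvt M - {x}. fvt (\<rho> v))
      in Lam z (psubsty \<rho> s) (psubst (\<rho>(x := Var z)) M))"
| "psubst \<rho> (App M N) = App (psubst \<rho> M) (psubst \<rho> N)"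
| "psubst \<rho> (Num n) = Num n"
| "psubst \<rho> PredC = PredC"
| "psubst \<rho> SuccC = SuccC"
| "psubst \<rho> IfC = IfC"
| "psubst \<rho> (YC s) = YC (psubsty \<rho> s)"
| "psubst \<rho> SetC = SetC"
| "psubst \<rho> GetC = GetC"
| "psubst \<rho> (Gate U) = Gate U"
| "psubst \<rho> SeqC = SeqC"
| "psubst \<rho> ParC = ParC"
| "psubst \<rho> IterC = IterC"
| "psubst \<rho> RevC = RevC"
| "psubst \<rho> (QPlus E F) = QPlus (psubst \<rho> E) (psubst \<rho> F)"
| "psubst \<rho> (QTimes E F) = QTimes (psubst \<rho> E) (psubst \<rho> F)"
| "psubst \<rho> SizeC = SizeC"
| "psubst \<rho> DMeasC = DMeasC"
| "psubsty \<rho> TNat = TNat"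
| "psubsty \<rho> TIdx = TIdx"
| "psubsty \<rho> (Circ E) = Circ (psubst \<rho> E)"
| "psubsty \<rho> (Pi x s t) =
     (let z = fresh (\<Union>v\<in>fvty t - {x}. fvt (\<rho> v))
      in Pi z (psubsty \<rho> s) (psubsty (\<rho>(x := Var z)) t))"

definition subst :: "nat \<Rightarrow> 'g trm \<Rightarrow> 'g trm \<Rightarrow> 'g trm" where
  "subst x N M = psubst (Var(x := N)) M"

definition substty :: "nat \<Rightarrow> 'g trm \<Rightarrow> 'g ty \<Rightarrow> 'g ty" where
  "substty x N t = psubsty (Var(x := N)) t"

definition arr :: "'g ty \<Rightarrow> 'g ty \<Rightarrow> 'g ty" where
  "arr s t = Pi (fresh (fvty t)) s t"

fun y_ok :: "'g ty \<Rightarrow> bool" where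
  "y_ok TNat = True"
| "y_ok TIdx = False"
| "y_ok (Circ E) = True"
| "y_ok (Pi x s t) = (x \<notin> fvty t \<and> y_ok t)"

inductive conv :: "'g trm \<Rightarrow> 'g trm \<Rightarrow> bool"
  and tconv :: "'g ty \<Rightarrow> 'g ty \<Rightarrow> bool" where
  c_refl: "conv M M"
| c_sym: "conv M N \<Longrightarrow> conv N M"
| c_trans: "conv M N \<Longrightarrow> conv N P \<Longrightarrow> conv M P"
| c_beta: "conv (App (Lam x s M) N) (subst x N M)"
| c_alpha: "y \<notin> fvt M \<Longrightarrow> conv (Lam x s M) (Lam y s (subst x (Var y) M))"
| c_app: "conv M M' \<Longrightarrow> conv N N' \<Longrightarrow> conv (App M N) (App M' N')"
| c_lam: "tconv s s' \<Longrightarrow> conv M M' \<Longrightarrow> conv (Lam x s M) (Lam x s' M')"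
| c_Y: "tconv s s' \<Longrightarrow> conv (YC s) (YC s')"
| c_plus: "conv E E' \<Longrightarrow> conv F F' \<Longrightarrow> conv (QPlus E F) (QPlus E' F')"
| c_times: "conv E E' \<Longrightarrow> conv F F' \<Longrightarrow> conv (QTimes E F) (QTimes E' F')"
| c_plus_comm: "conv (QPlus E F) (QPlus F E)"
| c_plus_assoc: "conv (QPlus (QPlus E F) G) (QPlus E (QPlus F G))"
| c_plus_0: "conv (QPlus (Num 0) E) E"
| c_times_comm: "conv (QTimes E F) (QTimes F E)"
| c_times_assoc: "conv (QTimes (QTimes E F) G) (QTimes E (QTimes F G))"
| c_times_1: "conv (QTimes (Num 1) E) E"
| c_times_0: "conv (QTimes (Num 0) E) (Num 0)"
| c_distrib: "conv (QTimes E (QPlus F G)) (QPlus (QTimes E F) (QTimes E G))"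
| c_num_plus: "conv (QPlus (Num m) (Num n)) (Num (m + n))"
| c_num_times: "conv (QTimes (Num m) (Num n)) (Num (m * n))"
| t_refl: "tconv s s"
| t_sym: "tconv s t \<Longrightarrow> tconv t s"
| t_trans: "tconv s t \<Longrightarrow> tconv t u \<Longrightarrow> tconv s u"
| t_circ: "conv E E' \<Longrightarrow> tconv (Circ E) (Circ E')"
| t_pi: "tconv s s' \<Longrightarrow> tconv t t' \<Longrightarrow> tconv (Pi x s t) (Pi x s' t')"
| t_alpha: "y \<notin> fvty t \<Longrightarrow> tconv (Pi x s t) (Pi y s (substty x (Var y) t))"

type_synonym 'g base = "(nat \<times> 'g ty) set"

definition is_base :: "'g base \<Rightarrow> bool" where
  "is_base B \<longleftrightarrow> finite B \<and> (\<forall>x s t. (x, s) \<in> B \<longrightarrow> (x, t) \<in> B \<longrightarrow> s = t)"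

text \<open>sC(B, sigma): the set of judgments B' |- E : Idx (represented as pairs (B', E)).\<close>
primrec sC :: "'g base \<Rightarrow> 'g ty \<Rightarrow> ('g base \<times> 'g trm) set" where
  "sC B TNat = {}"
| "sC B TIdx = {}"
| "sC B (Circ E) = {(B, E)}"
| "sC B (Pi x s t) = sC B s \<union> sC (insert (x, s) B) t"

definition sCs :: "'g base \<Rightarrow> 'g ty set \<Rightarrow> ('g base \<times> 'g trm) set" where
  "sCs B S = (\<Union>s\<in>S. sC B s)"

text \<open>hastype ar B M s is the judgment B |- M : s. WF(B,S) is written out as
  "every judgment (B', E) in sCs B S is derivable, i.e. hastype ar B' E TIdx".\<close>

inductive hastype :: "('g \<Rightarrow> nat) \<Rightarrow> 'g base \<Rightarrow> 'g trm \<Rightarrow> 'g ty \<Rightarrow> bool"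
  for ar :: "'g \<Rightarrow> nat" where
  P0: "is_base B \<Longrightarrow> is_base (insert (x, s) B) \<Longrightarrow>
       (\<forall>B' E. (B', E) \<in> sCs B (snd ` B \<union> {s}) \<longrightarrow> hastype ar B' E TIdx) \<Longrightarrow>
       hastype ar (insert (x, s) B) (Var x) s"
| P1: "hastype ar (insert (x, s) B) N t \<Longrightarrow> hastype ar B (Lam x s N) (Pi x s t)"
| P2: "hastype ar B P (Pi x s t) \<Longrightarrow> hastype ar B Q s \<Longrightarrow> hastype ar B (App P Q) (substty x Q t)"
| succ: "is_base B \<Longrightarrow> (\<forall>B' E. (B', E) \<in> sCs B (snd ` B) \<longrightarrow> hastype ar B' E TIdx) \<Longrightarrow>
       hastype ar B SuccC (arr TNat TNat)"
| pred: "is_base B \<Longrightarrow> (\<forall>B' E. (B', E) \<in> sCs B (snd ` B) \<longrightarrow> hastype ar B' E TIdx) \<Longrightarrow>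
       hastype ar B PredC (arr TNat TNat)"
| ifN: "is_base B \<Longrightarrow> (\<forall>B' E. (B', E) \<in> sCs B (snd ` B) \<longrightarrow> hastype ar B' E TIdx) \<Longrightarrow>
       hastype ar B IfC (arr TNat (arr TNat (arr TNat TNat)))"
| get: "is_base B \<Longrightarrow> (\<forall>B' E. (B', E) \<in> sCs B (snd ` B) \<longrightarrow> hastype ar B' E TIdx) \<Longrightarrow>
       hastype ar B GetC (arr TNat (arr TNat TNat))"
| set: "is_base B \<Longrightarrow> (\<forall>B' E. (B', E) \<in> sCs B (snd ` B) \<longrightarrow> hastype ar B' E TIdx) \<Longrightarrow>
       hastype ar B SetC (arr TNat (arr TNat TNat))"
| num: "is_base B \<Longrightarrow> (\<forall>B' E. (B', E) \<in> sCs B (snd ` B) \<longrightarrow> hastype ar B' E TIdx) \<Longrightarrow>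
       hastype ar B (Num n) TIdx"
| gate: "is_base B \<Longrightarrow> (\<forall>B' E. (B', E) \<in> sCs B (snd ` B) \<longrightarrow> hastype ar B' E TIdx) \<Longrightarrow>
       hastype ar B (Gate U) (Circ (Num (ar U)))"
| P5a: "hastype ar B E TIdx \<Longrightarrow> hastype ar B IfC (arr TNat (arr (Circ E) (arr (Circ E) (Circ E))))"
| P6: "y_ok s \<Longrightarrow> is_base B \<Longrightarrow>
       (\<forall>B' E. (B', E) \<in> sCs B (snd ` B \<union> {s}) \<longrightarrow> hastype ar B' E TIdx) \<Longrightarrow>
       hastype ar B (YC s) (arr (arr s s) s)"
| I0: "hastype ar B M TIdx \<Longrightarrow> hastype ar B M TNat"
| I2_plus: "hastype ar B E0 TIdx \<Longrightarrow> hastype ar B E1 TIdx \<Longrightarrow> hastype ar B (QPlus E0 E1) TIdx"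
| I2_times: "hastype ar B E0 TIdx \<Longrightarrow> hastype ar B E1 TIdx \<Longrightarrow> hastype ar B (QTimes E0 E1) TIdx"
| I3: "hastype ar B M (Circ E) \<Longrightarrow> hastype ar B (App SizeC M) TIdx"
| seq: "hastype ar B E TIdx \<Longrightarrow> hastype ar B SeqC (arr (Circ E) (arr (Circ E) (Circ E)))"
| par: "hastype ar B E0 TIdx \<Longrightarrow> hastype ar B E1 TIdx \<Longrightarrow>
       hastype ar B ParC (arr (Circ E0) (arr (Circ E1) (Circ (QPlus (QPlus E0 E1) (Num 1)))))"
| reverse: "hastype ar B E TIdx \<Longrightarrow> hastype ar B RevC (arr (Circ E) (Circ E))"
| iter: "hastype ar B E0 TIdx \<Longrightarrow> hastype ar B E1 TIdx \<Longrightarrow> x \<notin> fvt E0 \<union> fvt E1 \<Longrightarrow>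
       hastype ar B IterC (Pi x TIdx (arr (Circ E0) (arr (Circ E1)
          (Circ (QPlus E0 (QTimes (QPlus (Num 1) E1) (Var x)))))))"
| dmeas: "hastype ar B E TIdx \<Longrightarrow> hastype ar B DMeasC (arr TNat (arr (Circ E) TNat))"
| conv: "hastype ar B M s \<Longrightarrow> tconv s t \<Longrightarrow> hastype ar B M t"

definition apps :: "'g trm \<Rightarrow> 'g trm list \<Rightarrow> 'g trm" where
  "apps M Ps = foldl App M Ps"

fun crev :: "('g \<Rightarrow> 'g) \<Rightarrow> 'g trm \<Rightarrow> 'g trm" where
  "crev dg (Gate U) = Gate (dg U)"
| "crev dg (App (App SeqC C1) C2) = App (App SeqC (crev dg C2)) (crev dg C1)"
| "crev dg (App (App ParC C1) C2) = App (App ParC (crev dg C1)) (crev dg C2)"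
| "crev dg C = C"

primrec iterc :: "nat \<Rightarrow> 'g trm \<Rightarrow> 'g trm \<Rightarrow> 'g trm" where
  "iterc 0 C1 C0 = C0"
| "iterc (Suc n) C1 C0 = App (App ParC C1) (iterc n C1 C0)"

text \<open>The quantum semantics of measurement is
  abstracted as qprob k C m n: the probability of observing outcome n when
  measuring the circuit C (on k+1 qubits) run on input m.\<close>

inductive eval :: "('g \<Rightarrow> nat) \<Rightarrow> ('g \<Rightarrow> 'g) \<Rightarrow> (nat \<Rightarrow> 'g trm \<Rightarrow> nat \<Rightarrow> nat \<Rightarrow> real) \<Rightarrow>
                   'g trm \<Rightarrow> real \<Rightarrow> 'g trm \<Rightarrow> bool"
  for ar dg qprob where
  e_num: "eval ar dg qprob (Num n) 1 (Num n)"
| e_succ: "eval ar dg qprob M a (Num n) \<Longrightarrow> eval ar dg qprob (App SuccC M) a (Num (Suc n))"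
| e_pred: "eval ar dg qprob M a (Num n) \<Longrightarrow> eval ar dg qprob (App PredC M) a (Num (n - 1))"
| e_beta: "eval ar dg qprob (apps (subst x N M) Ps) a V \<Longrightarrow>
           eval ar dg qprob (apps (App (Lam x s M) N) Ps) a V"
| e_if0: "eval ar dg qprob M a (Num 0) \<Longrightarrow> eval ar dg qprob L b V \<Longrightarrow>
           eval ar dg qprob (App (App (App IfC M) L) R) (a * b) V"
| e_ifS: "eval ar dg qprob M a (Num (Suc n)) \<Longrightarrow> eval ar dg qprob R b V \<Longrightarrow>
           eval ar dg qprob (App (App (App IfC M) L) R) (a * b) V"
| e_Y: "eval ar dg qprob (apps (App M (App (YC s) M)) Ps) a V \<Longrightarrow>
           eval ar dg qprob (apps (App (YC s) M) Ps) a V"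
| e_size: "hastype ar {} M (Circ E) \<Longrightarrow> eval ar dg qprob E a (Num n) \<Longrightarrow>
           eval ar dg qprob (App SizeC M) a (Num n)"
| e_plus: "eval ar dg qprob E0 a (Num m) \<Longrightarrow> eval ar dg qprob E1 b (Num n) \<Longrightarrow>
           eval ar dg qprob (QPlus E0 E1) (a * b) (Num (m + n))"
| e_times: "eval ar dg qprob E0 a (Num m) \<Longrightarrow> eval ar dg qprob E1 b (Num n) \<Longrightarrow>
           eval ar dg qprob (QTimes E0 E1) (a * b) (Num (m * n))"
| e_get: "eval ar dg qprob M a (Num m) \<Longrightarrow> eval ar dg qprob N b (Num n) \<Longrightarrow>
           eval ar dg qprob (App (App GetC M) N) (a * b) (Num (of_bool (bit m n)))"
| e_set: "eval ar dg qprob M a (Num m) \<Longrightarrow> eval ar dg qprob N b (Num n) \<Longrightarrow>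
           eval ar dg qprob (App (App SetC M) N) (a * b) (Num (set_bit n m))"
| e_gate: "eval ar dg qprob (Gate U) 1 (Gate U)"
| e_seq: "eval ar dg qprob M a C1 \<Longrightarrow> eval ar dg qprob N b C2 \<Longrightarrow>
           eval ar dg qprob (App (App SeqC M) N) (a * b) (App (App SeqC C1) C2)"
| e_par: "eval ar dg qprob M a C1 \<Longrightarrow> eval ar dg qprob N b C2 \<Longrightarrow>
           eval ar dg qprob (App (App ParC M) N) (a * b) (App (App ParC C1) C2)"
| e_rev: "eval ar dg qprob M a C \<Longrightarrow> eval ar dg qprob (App RevC M) a (crev dg C)"
| e_iter: "eval ar dg qprob E a (Num n) \<Longrightarrow> eval ar dg qprob M0 b C0 \<Longrightarrow>
           eval ar dg qprob M1 c C1 \<Longrightarrow>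
           eval ar dg qprob (App (App (App IterC E) M0) M1) (a * b * c) (iterc n C1 C0)"
| e_dmeas: "eval ar dg qprob M a (Num m) \<Longrightarrow> eval ar dg qprob N b C \<Longrightarrow>
           hastype ar {} N (Circ (Num k)) \<Longrightarrow> 0 < qprob k C m n \<Longrightarrow> qprob k C m n \<le> 1 \<Longrightarrow>
           eval ar dg qprob (App (App DMeasC M) N) (a * b * qprob k C m n) (Num n)"

end

theory Submission
  imports Defs
begin

(* Erasing the terms inside types maps Nat and Idx to a base type of naturals,
   Circ E to a base type of circuits and Pi to the arrow.  Conversion does not change
   erasures, so every typable term is simply typed.  Simple typing survives the beta
   and Y unfolding steps of evaluation, and by the shape of the rules a term of simple
   type nat can only evaluate to a numeral; numerals are typed Idx in the empty base. *)

datatype simple_ty = SNat | SCirc | SArr simple_ty simple_ty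

fun erase :: "'g ty \<Rightarrow> simple_ty" where
  "erase TNat = SNat"
| "erase TIdx = SNat"
| "erase (Circ E) = SCirc"
| "erase (Pi x s t) = SArr (erase s) (erase t)"

lemma erase_psubsty [simp]: "erase (psubsty \<rho> t) = erase t"
  by (induction t arbitrary: \<rho> rule: erase.induct) (auto simp: Let_def)

lemma erase_arr [simp]: "erase (arr s t) = SArr (erase s) (erase t)"
  by (simp add: arr_def)

lemma erase_tconv: "tconv s t \<Longrightarrow> erase s = erase t"
  by (induction rule: conv_tconv.inducts(2)[where ?P1.0 = "\<lambda>_ _. True"])
    (auto simp: substty_def)

inductive simply_typed :: "(nat \<Rightarrow> simple_ty option) \<Rightarrow> 'g trm \<Rightarrow> simple_ty \<Rightarrow> bool" where
  st_var: "\<Gamma> x = Some T \<Longrightarrow> simply_typed \<Gamma> (Var x) T"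
| st_lam: "simply_typed (\<Gamma>(x \<mapsto> S)) M T \<Longrightarrow> simply_typed \<Gamma> (Lam x s M) (SArr S T)"
| st_app: "simply_typed \<Gamma> P (SArr S T) \<Longrightarrow> simply_typed \<Gamma> Q S \<Longrightarrow> simply_typed \<Gamma> (App P Q) T"
| st_num: "simply_typed \<Gamma> (Num n) SNat"
| st_succ: "simply_typed \<Gamma> SuccC (SArr SNat SNat)"
| st_pred: "simply_typed \<Gamma> PredC (SArr SNat SNat)"
| st_if: "simply_typed \<Gamma> IfC (SArr SNat (SArr X (SArr X X)))"
| st_Y: "simply_typed \<Gamma> (YC s) (SArr (SArr S S) S)"
| st_set: "simply_typed \<Gamma> SetC (SArr SNat (SArr SNat SNat))"
| st_get: "simply_typed \<Gamma> GetC (SArr SNat (SArr SNat SNat))"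
| st_gate: "simply_typed \<Gamma> (Gate U) SCirc"
| st_seq: "simply_typed \<Gamma> SeqC (SArr SCirc (SArr SCirc SCirc))"
| st_par: "simply_typed \<Gamma> ParC (SArr SCirc (SArr SCirc SCirc))"
| st_rev: "simply_typed \<Gamma> RevC (SArr SCirc SCirc)"
| st_iter: "simply_typed \<Gamma> IterC (SArr SNat (SArr SCirc (SArr SCirc SCirc)))"
| st_dmeas: "simply_typed \<Gamma> DMeasC (SArr SNat (SArr SCirc SNat))"
| st_plus: "simply_typed \<Gamma> E SNat \<Longrightarrow> simply_typed \<Gamma> F SNat \<Longrightarrow> simply_typed \<Gamma> (QPlus E F) SNat"
| st_times: "simply_typed \<Gamma> E SNat \<Longrightarrow> simply_typed \<Gamma> F SNat \<Longrightarrow> simply_typed \<Gamma> (QTimes E F) SNat"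
| st_size: "simply_typed \<Gamma> SizeC (SArr SCirc SNat)"

inductive_cases simply_typed_AppE: "simply_typed \<Gamma> (App P Q) T"
inductive_cases simply_typed_LamE: "simply_typed \<Gamma> (Lam x s M) T"
inductive_cases simply_typed_YE: "simply_typed \<Gamma> (YC s) T"
inductive_cases simply_typed_constE:
  "simply_typed \<Gamma> SeqC T" "simply_typed \<Gamma> ParC T" "simply_typed \<Gamma> RevC T"
  "simply_typed \<Gamma> IterC T" "simply_typed \<Gamma> (Gate U) T" "simply_typed \<Gamma> IfC T"

lemma simply_typed_cong_fvt:
  "simply_typed \<Gamma> M T \<Longrightarrow> (\<forall>v\<in>fvt M. \<Gamma> v = \<Gamma>' v) \<Longrightarrow> simply_typed \<Gamma>' M T"
proof (induction arbitrary: \<Gamma>' rule: simply_typed.induct)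
  case (st_lam \<Gamma> x S M T s)
  then show ?case by (auto intro!: simply_typed.st_lam)
qed (auto intro: simply_typed.intros)

lemma finite_fvt: "finite (fvt (M :: 'g trm))" and finite_fvty: "finite (fvty (t :: 'g ty))"
  by (induction M and t) auto

lemma fresh_notin: "finite S \<Longrightarrow> fresh S \<notin> S"
  unfolding fresh_def by (metis LeastI_ex ex_new_if_finite infinite_UNIV_nat)

lemma simply_typed_psubst:
  assumes "simply_typed \<Gamma> M T"
    and "\<forall>v\<in>fvt M. \<forall>S. \<Gamma> v = Some S \<longrightarrow> simply_typed \<Delta> (\<rho> v) S"
  shows "simply_typed \<Delta> (psubst \<rho> M) T"
  using assms
proof (induction arbitrary: \<Delta> \<rho> rule: simply_typed.induct)
  case (st_lam \<Gamma> x S M T s)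
  define z where "z = fresh (\<Union>v\<in>fvt M - {x}. fvt (\<rho> v))"
  have z_fresh: "z \<notin> fvt (\<rho> v)" if "v \<in> fvt M - {x}" for v
    using fresh_notin[of "\<Union>v\<in>fvt M - {x}. fvt (\<rho> v)"] that
    by (auto simp: z_def finite_fvt)
  have "simply_typed (\<Delta>(z \<mapsto> S)) (psubst (\<rho>(x := Var z)) M) T"
  proof (rule st_lam.IH, intro ballI allI impI)
    fix v S' assume v: "v \<in> fvt M" and \<Gamma>v: "(\<Gamma>(x \<mapsto> S)) v = Some S'"
    show "simply_typed (\<Delta>(z \<mapsto> S)) ((\<rho>(x := Var z)) v) S'"
    proof (cases "v = x")
      case True
      then show ?thesis using \<Gamma>v by (auto intro: st_var)
    next
      case False
      then have "simply_typed \<Delta> (\<rho> v) S'" using st_lam.prems v \<Gamma>v by auto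
      moreover have "\<forall>w\<in>fvt (\<rho> v). \<Delta> w = (\<Delta>(z \<mapsto> S)) w"
        using False z_fresh[of v] v by auto
      ultimately show ?thesis using False by (simp add: simply_typed_cong_fvt)
    qed
  qed
  then show ?case by (simp add: Let_def z_def[symmetric] simply_typed.st_lam)
next
  case (st_app \<Gamma> P S T Q)
  then have "simply_typed \<Delta> (psubst \<rho> P) (SArr S T)" "simply_typed \<Delta> (psubst \<rho> Q) S"
    by simp_all
  then show ?case by (simp add: simply_typed.st_app)
qed (auto intro: simply_typed.intros)

lemma simply_typed_subst:
  "simply_typed (\<Gamma>(x \<mapsto> S)) M T \<Longrightarrow> simply_typed \<Gamma> N S \<Longrightarrow> simply_typed \<Gamma> (subst x N M) T"
  unfolding subst_def by (auto intro!: simply_typed_psubst st_var)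

lemma list_all2_snoc1:
  "list_all2 R (xs @ [x]) ys \<longleftrightarrow> (\<exists>ys' y. ys = ys' @ [y] \<and> list_all2 R xs ys' \<and> R x y)"
proof
  assume "list_all2 R (xs @ [x]) ys"
  then show "\<exists>ys' y. ys = ys' @ [y] \<and> list_all2 R xs ys' \<and> R x y"
    by (auto simp: list_all2_append1 list_all2_Cons1)
qed (auto intro: list_all2_appendI)

lemma simply_typed_apps:
  "simply_typed \<Gamma> (apps H Ps) T \<longleftrightarrow>
    (\<exists>Ss. simply_typed \<Gamma> H (foldr SArr Ss T) \<and> list_all2 (simply_typed \<Gamma>) Ps Ss)"
proof (induction Ps arbitrary: T rule: rev_induct)
  case Nil
  then show ?case by (simp add: apps_def)
next
  case (snoc P Ps)
  have "simply_typed \<Gamma> (apps H (Ps @ [P])) T \<longleftrightarrow>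
      (\<exists>S. simply_typed \<Gamma> (apps H Ps) (SArr S T) \<and> simply_typed \<Gamma> P S)"
    by (auto simp: apps_def intro: st_app elim: simply_typed_AppE)
  also have "\<dots> \<longleftrightarrow> (\<exists>S Ss. simply_typed \<Gamma> H (foldr SArr (Ss @ [S]) T) \<and>
      list_all2 (simply_typed \<Gamma>) Ps Ss \<and> simply_typed \<Gamma> P S)"
    using snoc.IH by auto
  also have "\<dots> \<longleftrightarrow> (\<exists>Ss. simply_typed \<Gamma> H (foldr SArr Ss T) \<and>
      list_all2 (simply_typed \<Gamma>) (Ps @ [P]) Ss)"
    unfolding list_all2_snoc1 by blast
  finally show ?case .
qed

lemma simply_typed_beta:
  assumes "simply_typed \<Gamma> (apps (App (Lam x s M) N) Ps) T"
  shows "simply_typed \<Gamma> (apps (subst x N M) Ps) T"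
proof -
  obtain Ss where head: "simply_typed \<Gamma> (App (Lam x s M) N) (foldr SArr Ss T)"
    and args: "list_all2 (simply_typed \<Gamma>) Ps Ss"
    using assms by (auto simp: simply_typed_apps)
  from head have "simply_typed \<Gamma> (subst x N M) (foldr SArr Ss T)"
    by (auto elim!: simply_typed_AppE simply_typed_LamE intro: simply_typed_subst)
  with args show ?thesis by (auto simp: simply_typed_apps)
qed

lemma simply_typed_Y_unfold:
  assumes "simply_typed \<Gamma> (apps (App (YC s) M) Ps) T"
  shows "simply_typed \<Gamma> (apps (App M (App (YC s) M)) Ps) T"
proof -
  obtain Ss where head: "simply_typed \<Gamma> (App (YC s) M) (foldr SArr Ss T)"
    and args: "list_all2 (simply_typed \<Gamma>) Ps Ss"
    using assms by (auto simp: simply_typed_apps)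
  from head have "simply_typed \<Gamma> M (SArr (foldr SArr Ss T) (foldr SArr Ss T))"
    by (auto elim!: simply_typed_AppE simply_typed_YE)
  with head have "simply_typed \<Gamma> (App M (App (YC s) M)) (foldr SArr Ss T)"
    by (auto intro: st_app)
  with args show ?thesis by (auto simp: simply_typed_apps)
qed

lemma eval_simply_typed_SNat_Num:
  "eval ar dg qprob M a V \<Longrightarrow> simply_typed \<Gamma> M SNat \<Longrightarrow> \<exists>n. V = Num n"
proof (induction arbitrary: \<Gamma> rule: eval.induct)
  case (e_beta x N M Ps a V s)
  then show ?case by (blast dest: simply_typed_beta)
next
  case (e_Y M s Ps a V)
  then show ?case by (blast dest: simply_typed_Y_unfold)
qed (auto elim!: simply_typed_AppE simply_typed_constE)

definition base_ctx :: "'g base \<Rightarrow> nat \<Rightarrow> simple_ty option" where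
  "base_ctx B x = (if \<exists>s. (x, s) \<in> B then Some (erase (THE s. (x, s) \<in> B)) else None)"

lemma base_ctx_insert:
  assumes "is_base (insert (x, s) B)"
  shows "base_ctx (insert (x, s) B) = (base_ctx B)(x \<mapsto> erase s)"
proof
  fix y
  have "(THE t. (x, t) \<in> insert (x, s) B) = s"
    using assms unfolding is_base_def by (intro the_equality) auto
  then show "base_ctx (insert (x, s) B) y = ((base_ctx B)(x \<mapsto> erase s)) y"
    by (auto simp: base_ctx_def)
qed

lemma is_base_insertD: "is_base (insert p B) \<Longrightarrow> is_base B"
  unfolding is_base_def by auto

lemma hastype_is_base: "hastype ar B M s \<Longrightarrow> is_base B"
  by (induction rule: hastype.induct) (auto dest: is_base_insertD)

lemma hastype_simply_typed: "hastype ar B M s \<Longrightarrow> simply_typed (base_ctx B) M (erase s)"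
proof (induction rule: hastype.induct)
  case (P0 B x s)
  then show ?case by (auto simp: base_ctx_insert intro: st_var)
next
  case (P1 x s B N t)
  then have "simply_typed ((base_ctx B)(x \<mapsto> erase s)) N (erase t)"
    by (simp only: base_ctx_insert hastype_is_base)
  then show ?case by (simp add: st_lam)
next
  case (P2 B P x s t Q)
  then show ?case by (auto simp: substty_def intro: st_app)
next
  case (I3 B M E)
  then show ?case by (auto intro: st_app st_size)
next
  case (conv B M s t)
  then show ?case by (simp add: erase_tconv)
qed (auto intro: simply_typed.intros simp: arr_def)

lemma hastype_Num_empty: "hastype ar {} (Num n) TIdx"
  by (rule hastype.num) (auto simp: is_base_def sCs_def)

theorem corollary2:
  fixes ar :: "'g \<Rightarrow> nat" and dg :: "'g \<Rightarrow> 'g"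
    and qprob :: "nat \<Rightarrow> 'g trm \<Rightarrow> nat \<Rightarrow> nat \<Rightarrow> real"
    and M N :: "'g trm"
  assumes "\<forall>U. ar (dg U) = ar U"
    and "hastype ar {} M TIdx"
    and "eval ar dg qprob M 1 N"
  shows "hastype ar {} N TIdx \<and> (\<exists>n. N = Num n)"
proof -
  have "simply_typed (base_ctx ({} :: 'g base)) M SNat"
    using hastype_simply_typed[OF assms(2)] by simp
  then obtain n where "N = Num n"
    using eval_simply_typed_SNat_Num[OF assms(3)] by blast
  then show ?thesis by (simp add: hastype_Num_empty)
qed

end
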